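(* Let $\mathfrak{g}$ be a solvable Lie algebra of dimension $n$ (over $\mathbb{C}$, or real and complexified), with $k=\dim H^1(\mathfrak{g})$, weights $\alpha_{k+1},\dots,\alpha_n$ of the completely reducible representation associated to $\mathrm{ad}|_{[\mathfrak{g},\mathfrak{g}]}$, and let $\Omega_{\mathfrak{g}}$ be the finite set of all sums $\alpha_{i_1}+\dots+\alpha_{i_p}$, $k+1\le i_1<\dots<i_p\le n$, $p\ge 1$. Then there is a subset $\tilde\Omega_{\mathfrak{g}}\subseteq\Omega_{\mathfrak{g}}$, depending only on $\mathfrak{g}$, such that for every closed $1$-form $\omega\in\mathfrak{g}^*$ and scalar $\lambda$, the cohomology $H^*_{\lambda\omega}(\mathfrak{g})$ is non-trivial if and only if $-\lambda\omega\in\{0\}\cup\tilde\Omega_{\mathfrak{g}}$. In particular the set of such $-\lambda\omega$ is a finite subset of $H^1(\mathfrak{g})$.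
   Context: The differential $d$ on $\Lambda^*(\mathfrak{g}^* )$ is $df(X_1,\dots,X_{q+1})=\sum_{1\le i<j\le q+1}(-1)^{i+j-1}f([X_i,X_j],X_1,\dots,\hat X_i,\dots,\hat X_j,\dots,X_{q+1})$; closed $1$-forms on $\mathfrak{g}$ are identified with $H^1(\mathfrak{g})$. For a closed $1$-form $\omega$ and scalar $\lambda$, $H^*_{\lambda\omega}(\mathfrak{g})$ is the cohomology of $\Lambda^*(\mathfrak{g}^* )$ with differential $d_{\lambda\omega}(a)=da+\lambda\omega\wedge a$ (the cohomology of $\mathfrak{g}$ with coefficients in the one-dimensional representation $\xi\mapsto\lambda\omega(\xi)$). The weights $\alpha_j\in\mathfrak{g}^*$ are the linear forms by which $\mathfrak{g}$ acts on the one-dimensional quotients of an $\mathrm{ad}$-invariant flag in $[\mathfrak{g},\mathfrak{g}]$ (Lie's theorem). *)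

theory Defs
  imports "HOL-Analysis.Analysis"
begin

text \<open>A finite-dimensional complex Lie algebra is modelled on the complex vector space
  complex^'n (dimension CARD('n)), with a bracket br.\<close>

type_synonym 'n lvec = "complex ^ 'n"

definition lie_algebra :: "('n::finite lvec \<Rightarrow> 'n lvec \<Rightarrow> 'n lvec) \<Rightarrow> bool" where
  "lie_algebra br \<longleftrightarrow>
     (\<forall>a b x y z. br (a *s x + b *s y) z = a *s br x z + b *s br y z) \<and>
     (\<forall>a b x y z. br z (a *s x + b *s y) = a *s br z x + b *s br z y) \<and>
     (\<forall>x. br x x = 0) \<and>
     (\<forall>x y z. br x (br y z) + br y (br z x) + br z (br x y) = 0)"

definition derived :: "('n::finite lvec \<Rightarrow> 'n lvec \<Rightarrow> 'n lvec) \<Rightarrow> 'n lvec set \<Rightarrow> 'n lvec set" where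
  "derived br S = vec.span {br x y | x y. x \<in> S \<and> y \<in> S}"

definition solvable_lie :: "('n::finite lvec \<Rightarrow> 'n lvec \<Rightarrow> 'n lvec) \<Rightarrow> bool" where
  "solvable_lie br \<longleftrightarrow> lie_algebra br \<and> (\<exists>m. (derived br ^^ m) UNIV = {0})"

definition clinear_form :: "('n::finite lvec \<Rightarrow> complex) \<Rightarrow> bool" where
  "clinear_form f \<longleftrightarrow> (\<forall>a b x y. f (a *s x + b *s y) = a * f x + b * f y)"

text \<open>Closed 1-forms: d omega = 0, i.e. omega vanishes on all brackets.\<close>
definition closed_form :: "('n::finite lvec \<Rightarrow> 'n lvec \<Rightarrow> 'n lvec) \<Rightarrow> ('n lvec \<Rightarrow> complex) \<Rightarrow> bool" where
  "closed_form br \<omega> \<longleftrightarrow> clinear_form \<omega> \<and> (\<forall>x y. \<omega> (br x y) = 0)"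

text \<open>q-cochains: alternating complex-multilinear forms in the arguments X 0, ..., X (q-1),
  not depending on the remaining arguments.\<close>
definition cochain :: "nat \<Rightarrow> ((nat \<Rightarrow> 'n::finite lvec) \<Rightarrow> complex) \<Rightarrow> bool" where
  "cochain q f \<longleftrightarrow>
     (\<forall>X Y. (\<forall>i<q. X i = Y i) \<longrightarrow> f X = f Y) \<and>
     (\<forall>i<q. \<forall>X a b u v. f (X(i := a *s u + b *s v)) = a * f (X(i := u)) + b * f (X(i := v))) \<and>
     (\<forall>X i j. i < q \<longrightarrow> j < q \<longrightarrow> i \<noteq> j \<longrightarrow> X i = X j \<longrightarrow> f X = 0)"

definition del_arg :: "nat \<Rightarrow> (nat \<Rightarrow> 'a) \<Rightarrow> nat \<Rightarrow> 'a" where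
  "del_arg i X = (\<lambda>k. if k < i then X k else X (Suc k))"

definition cons_arg :: "'a \<Rightarrow> (nat \<Rightarrow> 'a) \<Rightarrow> nat \<Rightarrow> 'a" where
  "cons_arg x X = (\<lambda>k. if k = 0 then x else X (k - 1))"

text \<open>The Chevalley-Eilenberg differential d (as in the paper, 0-based indices) on q-cochains.\<close>
definition dCE :: "('n::finite lvec \<Rightarrow> 'n lvec \<Rightarrow> 'n lvec) \<Rightarrow> nat \<Rightarrow>
     ((nat \<Rightarrow> 'n lvec) \<Rightarrow> complex) \<Rightarrow> (nat \<Rightarrow> 'n lvec) \<Rightarrow> complex" where
  "dCE br q f X = (\<Sum>i<Suc q. \<Sum>j\<in>{i<..<Suc q}.
       (-1) ^ (i + j + 1) * f (cons_arg (br (X i) (X j)) (del_arg i (del_arg j X))))"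

definition wedge1 :: "('n::finite lvec \<Rightarrow> complex) \<Rightarrow> nat \<Rightarrow>
     ((nat \<Rightarrow> 'n lvec) \<Rightarrow> complex) \<Rightarrow> (nat \<Rightarrow> 'n lvec) \<Rightarrow> complex" where
  "wedge1 \<phi> q f X = (\<Sum>i<Suc q. (-1) ^ i * \<phi> (X i) * f (del_arg i X))"

definition dtw :: "('n::finite lvec \<Rightarrow> 'n lvec \<Rightarrow> 'n lvec) \<Rightarrow> ('n lvec \<Rightarrow> complex) \<Rightarrow> nat \<Rightarrow>
     ((nat \<Rightarrow> 'n lvec) \<Rightarrow> complex) \<Rightarrow> (nat \<Rightarrow> 'n lvec) \<Rightarrow> complex" where
  "dtw br \<phi> q f = (\<lambda>X. dCE br q f X + wedge1 \<phi> q f X)"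

fun coboundaries :: "('n::finite lvec \<Rightarrow> 'n lvec \<Rightarrow> 'n lvec) \<Rightarrow> ('n lvec \<Rightarrow> complex) \<Rightarrow> nat \<Rightarrow>
     ((nat \<Rightarrow> 'n lvec) \<Rightarrow> complex) set" where
  "coboundaries br \<phi> 0 = {\<lambda>X. 0}"
| "coboundaries br \<phi> (Suc q) = dtw br \<phi> q ` {g. cochain q g}"

definition twisted_cohom_nontrivial :: "('n::finite lvec \<Rightarrow> 'n lvec \<Rightarrow> 'n lvec) \<Rightarrow> ('n lvec \<Rightarrow> complex) \<Rightarrow> bool" where
  "twisted_cohom_nontrivial br \<phi> \<longleftrightarrow>
     (\<exists>q f. cochain q f \<and> dtw br \<phi> q f = (\<lambda>X. 0) \<and> f \<notin> coboundaries br \<phi> q)"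

text \<open>An ad-invariant complete flag in [g,g] (Lie's theorem) given by an adapted basis
  e 0, ..., e (m-1) of [g,g] with diagonal weights alpha j.\<close>
definition weight_flag :: "('n::finite lvec \<Rightarrow> 'n lvec \<Rightarrow> 'n lvec) \<Rightarrow> nat \<Rightarrow> (nat \<Rightarrow> 'n lvec) \<Rightarrow>
     (nat \<Rightarrow> 'n lvec \<Rightarrow> complex) \<Rightarrow> bool" where
  "weight_flag br m e \<alpha> \<longleftrightarrow>
     inj_on e {..<m} \<and> vec.independent (e ` {..<m}) \<and>
     vec.span (e ` {..<m}) = derived br UNIV \<and>
     (\<forall>j<m. \<forall>x. br x (e j) - \<alpha> j x *s e j \<in> vec.span (e ` {..<j}))"

definition weight_sums :: "nat \<Rightarrow> (nat \<Rightarrow> 'n::finite lvec \<Rightarrow> complex) \<Rightarrow> ('n lvec \<Rightarrow> complex) set" where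
  "weight_sums m \<alpha> = {(\<lambda>x. \<Sum>i\<in>I. \<alpha> i x) | I. I \<subseteq> {..<m} \<and> I \<noteq> {}}"

end

(* Let ph be a closed 1-form and theta_x the Lie derivative on ph-twisted cochains. Cartan's
   formula theta_x = contract x o d_ph + d_ph o contract x, together with [theta_x, d_ph] = 0,
   shows that a polynomial P(theta_x) acts on cohomology as the scalar P(0).
   Extending the ad-invariant flag of [g, g] to a basis of g makes theta_x triangular on basis
   tuples, with diagonal entries ph(x) + (sum of alpha_j(x) over a set of distinct indices j).
   If -ph is neither 0 nor in Omega_g, a generic x makes all these entries non-zero; a suitable
   product P of the factors (T - entry) then annihilates all cochains while P(0) is non-zero,
   so H_ph = 0. Conversely, for ph = 0 the constants give a non-zero class in degree 0. *)

theory Submission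
  imports Defs
begin

lemma del_arg_0_cons_arg [simp]: "del_arg 0 (cons_arg x Y) = Y"
  by (auto simp: del_arg_def cons_arg_def)

lemma del_arg_Suc_cons_arg [simp]: "del_arg (Suc k) (cons_arg x Y) = cons_arg x (del_arg k Y)"
  by (rule ext) (auto simp: del_arg_def cons_arg_def)

lemma cons_arg_upd_0 [simp]: "(cons_arg x Y)(0 := u) = cons_arg u Y"
  by (rule ext) (auto simp: cons_arg_def)

lemma cons_arg_upd_Suc [simp]: "(cons_arg x Y)(Suc k := u) = cons_arg x (Y(k := u))"
  by (rule ext) (auto simp: cons_arg_def)

lemma cons_arg_0 [simp]: "cons_arg x Y 0 = x"
  by (simp add: cons_arg_def)

lemma cons_arg_Suc [simp]: "cons_arg x Y (Suc k) = Y k"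
  by (simp add: cons_arg_def)

lemma cons_arg_hd_tl: "cons_arg (W 0) (\<lambda>k. W (Suc k)) = W"
  by (rule ext) (auto simp: cons_arg_def not0_implies_Suc)

lemma cons_arg_del_arg_0: "cons_arg a (del_arg 0 Y) = Y(0 := a)"
  by (rule ext) (auto simp: cons_arg_def del_arg_def not0_implies_Suc)

lemma del_arg_Suc: "del_arg (Suc k) Y = cons_arg (Y 0) (del_arg k (\<lambda>n. Y (Suc n)))"
  by (rule ext) (auto simp: cons_arg_def del_arg_def)

lemma cons_arg_ext: "(\<And>y Z. F (cons_arg y Z) = G (cons_arg y Z)) \<Longrightarrow> F = G"
  by (metis cons_arg_hd_tl ext)

section \<open>Cochains\<close>

lemma cochain_cong: "cochain q f \<Longrightarrow> (\<And>i. i < q \<Longrightarrow> X i = Y i) \<Longrightarrow> f X = f Y"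
  unfolding cochain_def by blast

lemma cochain_linear:
  "cochain q f \<Longrightarrow> i < q \<Longrightarrow> f (X(i := a *s u + b *s v)) = a * f (X(i := u)) + b * f (X(i := v))"
  unfolding cochain_def by blast

lemma cochain_alternating: "cochain q f \<Longrightarrow> i < q \<Longrightarrow> j < q \<Longrightarrow> i \<noteq> j \<Longrightarrow> X i = X j \<Longrightarrow> f X = 0"
  unfolding cochain_def by blast

lemma cochain_add_arg: "cochain q f \<Longrightarrow> i < q \<Longrightarrow> f (X(i := u + v)) = f (X(i := u)) + f (X(i := v))"
  using cochain_linear[of q f i X 1 u 1 v] by simp

lemma cochain_scale_arg: "cochain q f \<Longrightarrow> i < q \<Longrightarrow> f (X(i := a *s u)) = a * f (X(i := u))"
  using cochain_linear[of q f i X a u 0 u] by simp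

lemma cochain_zero_arg: "cochain q f \<Longrightarrow> i < q \<Longrightarrow> f (X(i := 0)) = 0"
  using cochain_scale_arg[of q f i X 0 0] by simp

lemma cochain_minus_arg: "cochain q f \<Longrightarrow> i < q \<Longrightarrow> f (X(i := - u)) = - f (X(i := u))"
  using cochain_scale_arg[of q f i X "-1" u] by simp

lemma cochain_diff_arg: "cochain q f \<Longrightarrow> i < q \<Longrightarrow> f (X(i := u - v)) = f (X(i := u)) - f (X(i := v))"
  using cochain_add_arg[of q f i X u "-v"] cochain_minus_arg[of q f i X v] by simp

lemma cochain_swap:
  assumes f: "cochain q f" and i: "i < q" and j: "j < q" and ij: "i \<noteq> j"
  shows "f (X(i := a, j := b)) = - f (X(i := b, j := a))"
proof -
  have diag: "f (X(i := c, j := c)) = 0" for c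
    by (rule cochain_alternating[OF f i j ij]) (use ij in simp)
  have "0 = f (X(i := a + b, j := a + b))" using diag by simp
  also have "\<dots> = f (X(i := a + b, j := a)) + f (X(i := a + b, j := b))"
    by (rule cochain_add_arg[OF f j])
  also have "f (X(i := a + b, j := a)) = f (X(j := a, i := a)) + f (X(j := a, i := b))"
    using cochain_add_arg[OF f i, of "X(j := a)" a b] ij by (simp add: fun_upd_twist)
  also have "f (X(i := a + b, j := b)) = f (X(j := b, i := a)) + f (X(j := b, i := b))"
    using cochain_add_arg[OF f i, of "X(j := b)" a b] ij by (simp add: fun_upd_twist)
  finally have sum: "0 = f (X(j := a, i := a)) + f (X(j := a, i := b))
                       + (f (X(j := b, i := a)) + f (X(j := b, i := b)))" .
  have "X(j := a, i := a) = X(i := a, j := a)" "X(j := b, i := b) = X(i := b, j := b)"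
       "X(j := a, i := b) = X(i := b, j := a)" "X(j := b, i := a) = X(i := a, j := b)"
    using ij by (auto intro: fun_upd_twist)
  then have "0 = f (X(i := b, j := a)) + f (X(i := a, j := b))"
    using sum diag by simp
  then show ?thesis by (simp add: eq_neg_iff_add_eq_0 add.commute)
qed

lemma cochain_swap_01:
  "cochain (Suc (Suc p)) f \<Longrightarrow> f (cons_arg a (cons_arg b Z)) = - f (cons_arg b (cons_arg a Z))"
  using cochain_swap[of "Suc (Suc p)" f 0 "Suc 0" "cons_arg a (cons_arg b Z)" b a] by simp

lemma cochain_lincomb:
  assumes f: "cochain q f" and g: "cochain q g"
  shows "cochain q (\<lambda>Y. a * f Y + b * g Y)"
  unfolding cochain_def
proof (intro conjI allI impI)
  fix X Y :: "nat \<Rightarrow> 'a lvec" assume "\<forall>i<q. X i = Y i"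
  then show "a * f X + b * g X = a * f Y + b * g Y"
    using cochain_cong[OF f, of X Y] cochain_cong[OF g, of X Y] by simp
next
  fix i X c d u v assume i: "i < q"
  show "a * f (X(i := c *s u + d *s v)) + b * g (X(i := c *s u + d *s v)) =
        c * (a * f (X(i := u)) + b * g (X(i := u))) + d * (a * f (X(i := v)) + b * g (X(i := v)))"
    using cochain_linear[OF f i] cochain_linear[OF g i] by (simp add: algebra_simps)
next
  fix X :: "nat \<Rightarrow> 'a lvec" and i j assume "i < q" "j < q" "i \<noteq> j" "X i = X j"
  then show "a * f X + b * g X = 0"
    using cochain_alternating[OF f] cochain_alternating[OF g] by simp
qed

lemma cochain_zero: "cochain q (\<lambda>Y. 0)"
  unfolding cochain_def by simp

lemma cochain_span_arg_zero:
  assumes g: "cochain q g" and i: "i < q" and U: "\<And>u. u \<in> U \<Longrightarrow> g (Y(i := u)) = 0"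
    and v: "v \<in> vec.span U"
  shows "g (Y(i := v)) = 0"
  using v
proof (induction rule: vec.span_induct)
  case base
  show ?case
  proof (rule vec.subspaceI)
    show "0 \<in> {v. g (Y(i := v)) = 0}" using cochain_zero_arg[OF g i] by simp
  next
    fix x y assume "x \<in> {v. g (Y(i := v)) = 0}" "y \<in> {v. g (Y(i := v)) = 0}"
    then show "x + y \<in> {v. g (Y(i := v)) = 0}" using cochain_add_arg[OF g i, of Y x y] by simp
  next
    fix c x assume "x \<in> {v. g (Y(i := v)) = 0}"
    then show "c *s x \<in> {v. g (Y(i := v)) = 0}" using cochain_scale_arg[OF g i, of Y c x] by simp
  qed
next
  case (step x)
  then show ?case using U by blast
qed

lemma cochain_eq_zero_if_zero_on_spanning_set:
  assumes g: "cochain q g" and B: "vec.span B = UNIV"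
    and zero: "\<And>Y. \<forall>i<q. Y i \<in> B \<Longrightarrow> g Y = 0"
  shows "g = (\<lambda>Y. 0)"
proof -
  have "g Y = 0" if "k \<le> q" "\<forall>i. k \<le> i \<and> i < q \<longrightarrow> Y i \<in> B" for k Y
    using that
  proof (induction k arbitrary: Y)
    case 0
    then show ?case using zero by simp
  next
    case (Suc k)
    have k: "k < q" using Suc.prems by simp
    have "g (Y(k := Y k)) = 0"
    proof (rule cochain_span_arg_zero[OF g k])
      show "g (Y(k := u)) = 0" if "u \<in> B" for u
      proof (rule Suc.IH)
        show "k \<le> q" using k by simp
        show "\<forall>i. k \<le> i \<and> i < q \<longrightarrow> (Y(k := u)) i \<in> B"
        proof (intro allI impI)
          fix i assume "k \<le> i \<and> i < q"
          then show "(Y(k := u)) i \<in> B"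
            using Suc.prems(2) that by (cases "i = k") (auto simp: Suc_le_eq)
        qed
      qed
      show "Y k \<in> vec.span B" using B by simp
    qed
    then show ?case by simp
  qed
  from this[of q] have "g Y = 0" for Y by (auto dest: leD)
  then show ?thesis by auto
qed

section \<open>Contraction, Lie derivative and Cartan's formula\<close>

definition contract :: "'n::finite lvec \<Rightarrow> ((nat \<Rightarrow> 'n lvec) \<Rightarrow> complex) \<Rightarrow> (nat \<Rightarrow> 'n lvec) \<Rightarrow> complex" where
  "contract x f Y = f (cons_arg x Y)"

(* The action of x on cochains with values in the ph-twisted module. With the sign convention
   of dCE, Cartan's formula (lemma dtw_cons_arg) reads
   dtw (contract x f) + contract x (dtw f) = lie_deriv x f. *)

definition lie_deriv :: "('n::finite lvec \<Rightarrow> 'n lvec \<Rightarrow> 'n lvec) \<Rightarrow> ('n lvec \<Rightarrow> complex) \<Rightarrow> nat \<Rightarrow>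
    'n lvec \<Rightarrow> ((nat \<Rightarrow> 'n lvec) \<Rightarrow> complex) \<Rightarrow> (nat \<Rightarrow> 'n lvec) \<Rightarrow> complex" where
  "lie_deriv br ph q x f Y = ph x * f Y + (\<Sum>k<q. f (Y(k := br x (Y k))))"

lemma cochain_contract:
  assumes f: "cochain (Suc p) f"
  shows "cochain p (contract x f)"
  unfolding cochain_def contract_def
proof (intro conjI allI impI)
  fix X Y :: "nat \<Rightarrow> 'a lvec" assume "\<forall>i<p. X i = Y i"
  then show "f (cons_arg x X) = f (cons_arg x Y)"
    by (intro cochain_cong[OF f]) (auto simp: cons_arg_def)
next
  fix i X a b u v assume "i < p"
  then show "f (cons_arg x (X(i := a *s u + b *s v))) =
      a * f (cons_arg x (X(i := u))) + b * f (cons_arg x (X(i := v)))"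
    using cochain_linear[OF f, of "Suc i" "cons_arg x X" a u b v] by simp
next
  fix X :: "nat \<Rightarrow> 'a lvec" and i j assume "i < p" "j < p" "i \<noteq> j" "X i = X j"
  then show "f (cons_arg x X) = 0"
    by (intro cochain_alternating[OF f, of "Suc i" "Suc j"]) auto
qed

lemma cochain_cons_arg_del_arg:
  assumes "cochain (Suc p) f" "k \<le> p"
  shows "f (cons_arg a (del_arg k Y)) = (-1) ^ k * f (Y(k := a))"
  using assms
proof (induction k arbitrary: p f Y)
  case 0
  then show ?case by (simp add: cons_arg_del_arg_0)
next
  case (Suc k)
  then obtain p' where p: "p = Suc p'" by (cases p) auto
  have f: "cochain (Suc (Suc p')) f" using Suc.prems p by simp
  define Y' where "Y' = (\<lambda>n. Y (Suc n))"
  have "f (cons_arg a (del_arg (Suc k) Y)) = f (cons_arg a (cons_arg (Y 0) (del_arg k Y')))"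
    by (simp add: del_arg_Suc Y'_def)
  also have "\<dots> = - contract (Y 0) f (cons_arg a (del_arg k Y'))"
    unfolding contract_def by (rule cochain_swap_01[OF f])
  also have "contract (Y 0) f (cons_arg a (del_arg k Y')) = (-1) ^ k * contract (Y 0) f (Y'(k := a))"
    by (rule Suc.IH) (use cochain_contract[OF f] Suc.prems p in auto)
  also have "contract (Y 0) f (Y'(k := a)) = f (Y(Suc k := a))"
    unfolding contract_def Y'_def by (metis cons_arg_hd_tl cons_arg_upd_Suc)
  finally show ?case by (simp only: power_Suc mult_minus1 mult_minus_left mult_1_left)
qed

lemma wedge1_cons_arg:
  "wedge1 ph (Suc p) f (cons_arg x Y) = ph x * f Y - wedge1 ph p (contract x f) Y"
  unfolding wedge1_def contract_def
  by (subst sum.lessThan_Suc_shift) (simp add: sum_negf[symmetric])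

lemma sum_greaterThanLessThan_Suc: "(\<Sum>j\<in>{Suc a<..<Suc n}. g j) = (\<Sum>j\<in>{a<..<n}. g (Suc j))"
  by (simp only: atLeastSucLessThan_greaterThanLessThan[symmetric] sum.shift_bounds_Suc_ivl)

lemma sum_greaterThanLessThan_0_Suc: "(\<Sum>j\<in>{0<..<Suc n}. g j) = (\<Sum>j<n. g (Suc j))"
  by (simp only: atLeastSucLessThan_greaterThanLessThan[symmetric] sum.shift_bounds_Suc_ivl
      atLeast0LessThan)

lemma dCE_cons_arg:
  assumes f: "cochain (Suc p) f"
  shows "dCE br (Suc p) f (cons_arg x Y) =
    (\<Sum>k<Suc p. f (Y(k := br x (Y k)))) - dCE br p (contract x f) Y"
proof -
  define T where "T i j = (-1::complex) ^ (i + j + 1) *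
    f (cons_arg (br (cons_arg x Y i) (cons_arg x Y j)) (del_arg i (del_arg j (cons_arg x Y))))" for i j
  have "dCE br (Suc p) f (cons_arg x Y) = (\<Sum>i<Suc (Suc p). \<Sum>j\<in>{i<..<Suc (Suc p)}. T i j)"
    unfolding dCE_def T_def by simp
  also have "\<dots> = (\<Sum>j\<in>{0<..<Suc (Suc p)}. T 0 j) + (\<Sum>i<Suc p. \<Sum>j\<in>{Suc i<..<Suc (Suc p)}. T (Suc i) j)"
    by (rule sum.lessThan_Suc_shift)
  also have "(\<Sum>j\<in>{0<..<Suc (Suc p)}. T 0 j) = (\<Sum>k<Suc p. f (Y(k := br x (Y k))))"
    unfolding sum_greaterThanLessThan_0_Suc
  proof (rule sum.cong[OF refl])
    fix k assume k: "k \<in> {..<Suc p}"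
    have "T 0 (Suc k) = (-1) ^ k * f (cons_arg (br x (Y k)) (del_arg k Y))"
      unfolding T_def by simp
    also have "\<dots> = (-1) ^ k * ((-1) ^ k * f (Y(k := br x (Y k))))"
      using cochain_cons_arg_del_arg[OF f, of k "br x (Y k)" Y] k by simp
    also have "\<dots> = f (Y(k := br x (Y k)))"
      by (simp flip: mult.assoc power_add add: power_even_eq[symmetric] del: fun_upd_apply)
    finally show "T 0 (Suc k) = f (Y(k := br x (Y k)))" .
  qed
  also have "(\<Sum>i<Suc p. \<Sum>j\<in>{Suc i<..<Suc (Suc p)}. T (Suc i) j) = - dCE br p (contract x f) Y"
  proof -
    have "T (Suc i) (Suc j) = - ((-1) ^ (i + j + 1) *
        contract x f (cons_arg (br (Y i) (Y j)) (del_arg i (del_arg j Y))))"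
      if ij: "i < j" "j < Suc p" for i j
    proof -
      obtain p' where "p = Suc p'" using ij by (cases p) auto
      then show ?thesis
        unfolding T_def contract_def
        using cochain_swap_01[of p' f "br (Y i) (Y j)" x "del_arg i (del_arg j Y)"] f by simp
    qed
    then show ?thesis
      unfolding sum_greaterThanLessThan_Suc dCE_def by (simp add: sum_negf)
  qed
  finally show ?thesis by (simp only: diff_conv_add_uminus)
qed

lemma dtw_0: "dtw br ph 0 f W = ph (W 0) * f (\<lambda>n. W (Suc n))"
  by (simp add: dtw_def dCE_def wedge1_def del_arg_def atLeastSucLessThan_greaterThanLessThan[symmetric])

lemma dtw_cons_arg:
  assumes "cochain (Suc p) f"
  shows "dtw br ph (Suc p) f (cons_arg x Y) = lie_deriv br ph (Suc p) x f Y - dtw br ph p (contract x f) Y"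
  unfolding dtw_def lie_deriv_def dCE_cons_arg[OF assms] wedge1_cons_arg by (simp add: algebra_simps)

lemma contract_lie_deriv:
  "contract y (lie_deriv br ph (Suc p) x f) Z = lie_deriv br ph p x (contract y f) Z + contract (br x y) f Z"
  unfolding lie_deriv_def contract_def by (subst sum.lessThan_Suc_shift) (simp add: algebra_simps)

lemma dtw_lincomb:
  "dtw br ph q (\<lambda>Y. a * f Y + b * g Y) X = a * dtw br ph q f X + b * dtw br ph q g X"
proof -
  have "dCE br q (\<lambda>Y. a * f Y + b * g Y) X = a * dCE br q f X + b * dCE br q g X"
    unfolding dCE_def
    by (simp add: ring_distribs sum.distrib sum_distrib_left mult.left_commute del: power_Suc)
  moreover have "wedge1 ph q (\<lambda>Y. a * f Y + b * g Y) X = a * wedge1 ph q f X + b * wedge1 ph q g X"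
    unfolding wedge1_def
    by (simp add: ring_distribs sum.distrib sum_distrib_left mult.left_commute del: power_Suc)
  ultimately show ?thesis unfolding dtw_def by (simp add: algebra_simps)
qed

lemma dtw_add: "dtw br ph q (\<lambda>Y. f Y + g Y) X = dtw br ph q f X + dtw br ph q g X"
  using dtw_lincomb[of br ph q 1 f 1 g X] by simp

lemma dtw_zero: "dtw br ph q (\<lambda>Y. 0) X = 0"
  unfolding dtw_def dCE_def wedge1_def by simp

lemma lie_deriv_lincomb:
  "lie_deriv br ph q x (\<lambda>Y. a * f Y + b * g Y) X = a * lie_deriv br ph q x f X + b * lie_deriv br ph q x g X"
  unfolding lie_deriv_def by (simp add: algebra_simps sum.distrib sum_distrib_left)

lemma lie_deriv_diff:
  "lie_deriv br ph q x (\<lambda>Y. f Y - g Y) X = lie_deriv br ph q x f X - lie_deriv br ph q x g X"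
  using lie_deriv_lincomb[of br ph q x 1 f "-1" g X] by simp

lemma lie_deriv_zero: "lie_deriv br ph q x (\<lambda>Y. 0) = (\<lambda>Y. 0)"
  unfolding lie_deriv_def by simp

definition twisted_cocycle :: "('n::finite lvec \<Rightarrow> 'n lvec \<Rightarrow> 'n lvec) \<Rightarrow> ('n lvec \<Rightarrow> complex) \<Rightarrow> nat \<Rightarrow>
    ((nat \<Rightarrow> 'n lvec) \<Rightarrow> complex) \<Rightarrow> bool" where
  "twisted_cocycle br ph q f \<longleftrightarrow> cochain q f \<and> dtw br ph q f = (\<lambda>X. 0)"

lemma twisted_cocycle_lincomb:
  "twisted_cocycle br ph q f \<Longrightarrow> twisted_cocycle br ph q g \<Longrightarrow> twisted_cocycle br ph q (\<lambda>Y. a * f Y + b * g Y)"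
  unfolding twisted_cocycle_def by (simp add: cochain_lincomb dtw_lincomb fun_eq_iff)

lemma coboundaries_lincomb:
  assumes "f \<in> coboundaries br ph (Suc p)" and "g \<in> coboundaries br ph (Suc p)"
  shows "(\<lambda>Y. a * f Y + b * g Y) \<in> coboundaries br ph (Suc p)"
proof -
  obtain f' g' where "cochain p f'" "cochain p g'" "f = dtw br ph p f'" "g = dtw br ph p g'"
    using assms by auto
  then show ?thesis
    by (auto simp: image_iff dtw_lincomb fun_eq_iff intro!: exI[of _ "\<lambda>Y. a * f' Y + b * g' Y"] cochain_lincomb)
qed

lemma zero_in_coboundaries: "(\<lambda>Y. 0) \<in> coboundaries br ph q"
proof (cases q)
  case (Suc p)
  have "(\<lambda>Y. 0) = dtw br ph p (\<lambda>Y. 0)" by (simp add: dtw_zero fun_eq_iff)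
  then show ?thesis using Suc cochain_zero by auto
qed simp

definition lie_deriv_poly :: "('n::finite lvec \<Rightarrow> 'n lvec \<Rightarrow> 'n lvec) \<Rightarrow> ('n lvec \<Rightarrow> complex) \<Rightarrow> nat \<Rightarrow>
    'n lvec \<Rightarrow> complex list \<Rightarrow> ((nat \<Rightarrow> 'n lvec) \<Rightarrow> complex) \<Rightarrow> (nat \<Rightarrow> 'n lvec) \<Rightarrow> complex" where
  "lie_deriv_poly br ph q x L f = foldr (\<lambda>\<mu> g Y. lie_deriv br ph q x g Y - \<mu> * g Y) L f"

lemma lie_deriv_poly_Nil [simp]: "lie_deriv_poly br ph q x [] f = f"
  by (simp add: lie_deriv_poly_def)

lemma lie_deriv_poly_Cons:
  "lie_deriv_poly br ph q x (\<mu> # L) f =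
    (\<lambda>Y. lie_deriv br ph q x (lie_deriv_poly br ph q x L f) Y - \<mu> * lie_deriv_poly br ph q x L f Y)"
  by (simp add: lie_deriv_poly_def)

lemma lie_deriv_poly_append:
  "lie_deriv_poly br ph q x (L1 @ L2) f = lie_deriv_poly br ph q x L1 (lie_deriv_poly br ph q x L2 f)"
  by (simp add: lie_deriv_poly_def)

locale twisted_lie_algebra =
  fixes br :: "'n::finite lvec \<Rightarrow> 'n lvec \<Rightarrow> 'n lvec" and ph :: "'n lvec \<Rightarrow> complex"
  assumes lie_algebra: "lie_algebra br" and closed: "closed_form br ph"
begin

lemma bracket_linear_left: "br (a *s x + b *s y) z = a *s br x z + b *s br y z"
  using lie_algebra unfolding lie_algebra_def by blast

lemma bracket_linear_right: "br z (a *s x + b *s y) = a *s br z x + b *s br z y"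
  using lie_algebra unfolding lie_algebra_def by blast

lemma bracket_self: "br x x = 0"
  using lie_algebra unfolding lie_algebra_def by blast

lemma jacobi: "br x (br y z) + br y (br z x) + br z (br x y) = 0"
  using lie_algebra unfolding lie_algebra_def by blast

lemma bracket_add_left: "br (x + y) z = br x z + br y z"
  using bracket_linear_left[of 1 x 1 y z] by simp

lemma bracket_add_right: "br z (x + y) = br z x + br z y"
  using bracket_linear_right[of z 1 x 1 y] by simp

lemma bracket_antisym: "br x y = - br y x"
proof -
  have "0 = br (x + y) (x + y)" by (simp add: bracket_self)
  also have "\<dots> = br x y + br y x"
    by (simp only: bracket_add_left bracket_add_right) (simp add: bracket_self)
  finally show ?thesis by (metis eq_neg_iff_add_eq_0)
qed

lemma bracket_bracket_commute: "br y (br x z) - br x (br y z) = - br (br x y) z"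
proof -
  have "br y (br x z) = - br y (br z x)"
    using bracket_antisym[of x z] bracket_linear_right[of y "-1" "br z x" 0 0] by simp
  moreover have "br x (br y z) = - (br y (br z x) + br z (br x y))"
    using jacobi[of x y z] by (subst eq_neg_iff_add_eq_0) (simp add: add.assoc)
  ultimately show ?thesis using bracket_antisym[of "br x y" z] by (simp add: algebra_simps)
qed

lemma ph_bracket [simp]: "ph (br x y) = 0"
  using closed unfolding closed_form_def by blast

lemma cochain_lie_deriv:
  assumes f: "cochain q f"
  shows "cochain q (lie_deriv br ph q x f)"
  unfolding cochain_def
proof (intro conjI allI impI)
  fix X Y :: "nat \<Rightarrow> 'n lvec" assume XY: "\<forall>i<q. X i = Y i"
  have "f (X(k := br x (X k))) = f (Y(k := br x (Y k)))" if "k < q" for k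
    by (rule cochain_cong[OF f]) (use XY that in auto)
  then show "lie_deriv br ph q x f X = lie_deriv br ph q x f Y"
    unfolding lie_deriv_def using cochain_cong[OF f, of X Y] XY by simp
next
  fix i X a b u v assume i: "i < q"
  have "f ((X(i := a *s u + b *s v))(k := br x ((X(i := a *s u + b *s v)) k))) =
     a * f ((X(i := u))(k := br x ((X(i := u)) k))) + b * f ((X(i := v))(k := br x ((X(i := v)) k)))"
    if k: "k < q" for k
  proof (cases "k = i")
    case True
    then show ?thesis
      using cochain_linear[OF f i, of X a "br x u" b "br x v"] by (simp add: bracket_linear_right)
  next
    case False
    then show ?thesis
      using cochain_linear[OF f i, of "X(k := br x (X k))" a u b v] by (simp add: fun_upd_twist)
  qed
  then show "lie_deriv br ph q x f (X(i := a *s u + b *s v)) =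
      a * lie_deriv br ph q x f (X(i := u)) + b * lie_deriv br ph q x f (X(i := v))"
    unfolding lie_deriv_def using cochain_linear[OF f i, of X a u b v]
    by (simp add: sum.distrib sum_distrib_left algebra_simps)
next
  fix X :: "nat \<Rightarrow> 'n lvec" and i j assume ij: "i < q" "j < q" "i \<noteq> j" "X i = X j"
  have "(\<Sum>k<q. f (X(k := br x (X k)))) = (\<Sum>k\<in>{i, j}. f (X(k := br x (X k))))"
    by (rule sum.mono_neutral_right) (use ij in \<open>auto intro: cochain_alternating[OF f ij(1,2,3)]\<close>)
  also have "\<dots> = f (X(i := br x (X i), j := X j)) + f (X(i := X j, j := br x (X i)))"
    using ij by (simp add: fun_upd_twist fun_upd_idem)
  also have "\<dots> = 0"
    using cochain_swap[OF f ij(1,2,3), of X "br x (X i)" "X j"] by simp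
  finally show "lie_deriv br ph q x f X = 0"
    unfolding lie_deriv_def using cochain_alternating[OF f ij] by simp
qed

lemma lie_deriv_commutator:
  assumes f: "cochain q f"
  shows "lie_deriv br ph q x (lie_deriv br ph q y f) Z - lie_deriv br ph q y (lie_deriv br ph q x f) Z =
    - lie_deriv br ph q (br x y) f Z"
proof -
  define M where "M x y i j = f ((Z(i := br x (Z i)))(j := br y ((Z(i := br x (Z i))) j)))" for x y i j
  have expand: "lie_deriv br ph q x (lie_deriv br ph q y f) Z =
      ph x * ph y * f Z + ph x * (\<Sum>j<q. f (Z(j := br y (Z j))))
      + ph y * (\<Sum>i<q. f (Z(i := br x (Z i)))) + (\<Sum>i<q. \<Sum>j<q. M x y i j)" for x y
    unfolding lie_deriv_def M_def by (simp add: sum.distrib sum_distrib_left algebra_simps)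
  have diag: "M x y i j - M y x j i = (if j = i then - f (Z(i := br (br x y) (Z i))) else 0)"
    if i: "i < q" for i j
  proof (cases "i = j")
    case True
    have "M x y i j - M y x j i = f (Z(i := br y (br x (Z i)))) - f (Z(i := br x (br y (Z i))))"
      unfolding M_def True by simp
    also have "\<dots> = - f (Z(i := br (br x y) (Z i)))"
      unfolding cochain_diff_arg[OF f i, symmetric] bracket_bracket_commute by (rule cochain_minus_arg[OF f i])
    finally show ?thesis using True by simp
  next
    case False
    then show ?thesis unfolding M_def by (simp add: fun_upd_twist)
  qed
  have "(\<Sum>i<q. \<Sum>j<q. M x y i j) - (\<Sum>i<q. \<Sum>j<q. M y x i j) = (\<Sum>i<q. \<Sum>j<q. M x y i j - M y x j i)"
    by (subst (2) sum.swap) (simp add: sum_subtractf)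
  also have "\<dots> = (\<Sum>i<q. - f (Z(i := br (br x y) (Z i))))"
    by (simp add: diag)
  finally show ?thesis
    unfolding expand unfolding lie_deriv_def by (simp add: sum_negf algebra_simps)
qed

lemma dtw_lie_deriv:
  "cochain q f \<Longrightarrow> dtw br ph q (lie_deriv br ph q x f) = lie_deriv br ph (Suc q) x (dtw br ph q f)"
proof (induction q arbitrary: f x)
  case 0
  show ?case
  proof (rule cons_arg_ext)
    fix y Z
    show "dtw br ph 0 (lie_deriv br ph 0 x f) (cons_arg y Z) = lie_deriv br ph (Suc 0) x (dtw br ph 0 f) (cons_arg y Z)"
      by (simp add: dtw_0 lie_deriv_def)
  qed
next
  case (Suc p)
  have f: "cochain (Suc p) f" by fact
  show ?case
  proof (rule cons_arg_ext)
    fix y Z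
    have contract_lie_deriv_f:
      "contract y (lie_deriv br ph (Suc p) x f) = (\<lambda>Z. lie_deriv br ph p x (contract y f) Z + contract (br x y) f Z)"
      by (rule ext) (rule contract_lie_deriv)
    have contract_dtw: "contract z (dtw br ph (Suc p) f) =
        (\<lambda>Z. lie_deriv br ph (Suc p) z f Z - dtw br ph p (contract z f) Z)" for z
      by (rule ext) (simp add: contract_def dtw_cons_arg[OF f])
    have IH: "dtw br ph p (lie_deriv br ph p x (contract y f)) = lie_deriv br ph (Suc p) x (dtw br ph p (contract y f))"
      by (rule Suc.IH[OF cochain_contract[OF f]])
    have "dtw br ph (Suc p) (lie_deriv br ph (Suc p) x f) (cons_arg y Z) =
      lie_deriv br ph (Suc p) y (lie_deriv br ph (Suc p) x f) Z
      - (lie_deriv br ph (Suc p) x (dtw br ph p (contract y f)) Z + dtw br ph p (contract (br x y) f) Z)"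
      unfolding dtw_cons_arg[OF cochain_lie_deriv[OF f]] contract_lie_deriv_f dtw_add IH ..
    moreover have "lie_deriv br ph (Suc (Suc p)) x (dtw br ph (Suc p) f) (cons_arg y Z) =
      lie_deriv br ph (Suc p) x (lie_deriv br ph (Suc p) y f) Z - lie_deriv br ph (Suc p) x (dtw br ph p (contract y f)) Z
      + (lie_deriv br ph (Suc p) (br x y) f Z - dtw br ph p (contract (br x y) f) Z)"
      using contract_lie_deriv[of y br ph "Suc p" x "dtw br ph (Suc p) f" Z]
      unfolding contract_dtw lie_deriv_diff by (simp add: contract_def)
    ultimately show "dtw br ph (Suc p) (lie_deriv br ph (Suc p) x f) (cons_arg y Z) =
        lie_deriv br ph (Suc (Suc p)) x (dtw br ph (Suc p) f) (cons_arg y Z)"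
      using lie_deriv_commutator[OF f, of x y Z] by algebra
  qed
qed

lemma twisted_cocycle_lie_deriv:
  "twisted_cocycle br ph q f \<Longrightarrow> twisted_cocycle br ph q (lie_deriv br ph q x f)"
  unfolding twisted_cocycle_def by (simp add: dtw_lie_deriv cochain_lie_deriv lie_deriv_zero)

lemma lie_deriv_in_coboundaries:
  assumes "twisted_cocycle br ph (Suc p) f"
  shows "lie_deriv br ph (Suc p) x f \<in> coboundaries br ph (Suc p)"
proof -
  have f: "cochain (Suc p) f" and closed: "dtw br ph (Suc p) f = (\<lambda>X. 0)"
    using assms unfolding twisted_cocycle_def by auto
  have "lie_deriv br ph (Suc p) x f = dtw br ph p (contract x f)"
    using dtw_cons_arg[OF f, of br ph x] closed by (simp add: fun_eq_iff)
  then show ?thesis using cochain_contract[OF f] by simp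
qed

lemma lie_deriv_poly_cocycle:
  assumes f: "twisted_cocycle br ph (Suc p) f"
  shows "twisted_cocycle br ph (Suc p) (lie_deriv_poly br ph (Suc p) x L f) \<and>
    (\<lambda>Y. lie_deriv_poly br ph (Suc p) x L f Y - (\<Prod>\<mu>\<leftarrow>L. - \<mu>) * f Y) \<in> coboundaries br ph (Suc p)"
proof (induction L)
  case Nil
  then show ?case using f zero_in_coboundaries[of br ph "Suc p"] by (simp del: coboundaries.simps)
next
  case (Cons \<mu> L)
  define g where "g = lie_deriv_poly br ph (Suc p) x L f"
  define c where "c = (\<Prod>\<mu>\<leftarrow>L. - \<mu>)"
  have g: "twisted_cocycle br ph (Suc p) g" and h: "(\<lambda>Y. g Y - c * f Y) \<in> coboundaries br ph (Suc p)"
    using Cons unfolding g_def c_def by auto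
  have "twisted_cocycle br ph (Suc p) (\<lambda>Y. 1 * lie_deriv br ph (Suc p) x g Y + (- \<mu>) * g Y)"
    by (rule twisted_cocycle_lincomb[OF twisted_cocycle_lie_deriv[OF g] g])
  moreover have "(\<lambda>Y. 1 * lie_deriv br ph (Suc p) x g Y + (- \<mu>) * (g Y - c * f Y)) \<in> coboundaries br ph (Suc p)"
    using coboundaries_lincomb[OF lie_deriv_in_coboundaries[OF g] h] .
  ultimately show ?case
    unfolding lie_deriv_poly_Cons g_def[symmetric] by (simp add: c_def algebra_simps)
qed

lemma in_coboundaries_if_lie_deriv_poly_zero:
  assumes f: "twisted_cocycle br ph (Suc p) f" and zero: "lie_deriv_poly br ph (Suc p) x L f = (\<lambda>Y. 0)"
    and L: "0 \<notin> set L"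
  shows "f \<in> coboundaries br ph (Suc p)"
proof -
  define c where "c = (\<Prod>\<mu>\<leftarrow>L. - \<mu>)"
  have c: "c \<noteq> 0" unfolding c_def using L by (induction L) auto
  have "(\<lambda>Y. 0 - c * f Y) \<in> coboundaries br ph (Suc p)"
    using lie_deriv_poly_cocycle[OF f, of x L] zero unfolding c_def by simp
  from coboundaries_lincomb[OF this this, of "- 1 / c" 0] show ?thesis
    using c by simp
qed

end

section \<open>Lie derivatives that are triangular in a basis\<close>

locale triangular_lie_deriv = twisted_lie_algebra br ph
  for br :: "'n::finite lvec \<Rightarrow> 'n lvec \<Rightarrow> 'n lvec" and ph +
  fixes x :: "'n lvec" and u :: "nat \<Rightarrow> 'n lvec" and N :: nat and \<delta> :: "nat \<Rightarrow> complex"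
  assumes bracket_triangular: "\<And>j. j < N \<Longrightarrow> br x (u j) - \<delta> j *s u j \<in> vec.span (u ` {..<j})"
    and span_basis: "vec.span (u ` {..<N}) = UNIV"
begin

(* Order the basis tuples u o J by their weight (sum i<q. J i). The Lie derivative is triangular
   for this order, with diagonal entries ph x + (sum i<q. delta (J i)) (lemma lie_deriv_basis_tuple);
   so applying the product of (lie_deriv x - mu) over all diagonal entries mu raises by one the
   weight below which a cochain vanishes. Tuples with a repeated index need no factor: alternating
   cochains vanish on them. *)

definition vanishes_below :: "nat \<Rightarrow> nat \<Rightarrow> ((nat \<Rightarrow> 'n lvec) \<Rightarrow> complex) \<Rightarrow> bool" where
  "vanishes_below q s g \<longleftrightarrow>
    cochain q g \<and> (\<forall>J. (\<forall>i<q. J i < N) \<and> (\<Sum>i<q. J i) < s \<longrightarrow> g (\<lambda>k. u (J k)) = 0)"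

lemma vanishes_below_bracket_arg:
  assumes g: "vanishes_below q s g" and J: "\<forall>i<q. J i < N" "(\<Sum>i<q. J i) \<le> s" and i: "i < q"
  shows "g ((\<lambda>k. u (J k))(i := br x (u (J i)))) = \<delta> (J i) * g (\<lambda>k. u (J k))"
proof -
  have cg: "cochain q g" using g by (simp add: vanishes_below_def)
  define v where "v = br x (u (J i)) - \<delta> (J i) *s u (J i)"
  have Ji: "J i < N" using J i by auto
  have "g ((\<lambda>k. u (J k))(i := v)) = 0"
  proof (rule cochain_span_arg_zero[OF cg i])
    show "v \<in> vec.span (u ` {..<J i})" unfolding v_def by (rule bracket_triangular[OF Ji])
  next
    fix w assume "w \<in> u ` {..<J i}"
    then obtain l where l: "l < J i" "w = u l" by auto
    have "(\<Sum>k<q. (J(i := l)) k) < (\<Sum>k<q. J k)"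
      by (rule sum_strict_mono_ex1) (use i l in auto)
    moreover have "(\<lambda>k. u (J k))(i := w) = (\<lambda>k. u ((J(i := l)) k))"
      using l by (auto simp: fun_eq_iff)
    ultimately show "g ((\<lambda>k. u (J k))(i := w)) = 0"
      using g J l Ji unfolding vanishes_below_def by auto
  qed
  moreover have "br x (u (J i)) = \<delta> (J i) *s u (J i) + 1 *s v" unfolding v_def by simp
  moreover have "(\<lambda>k. u (J k))(i := u (J i)) = (\<lambda>k. u (J k))" by auto
  ultimately show ?thesis
    using cochain_linear[OF cg i, of "\<lambda>k. u (J k)" "\<delta> (J i)" "u (J i)" 1 v] by simp
qed

lemma lie_deriv_basis_tuple:
  assumes g: "vanishes_below q s g" and J: "\<forall>i<q. J i < N" "(\<Sum>i<q. J i) \<le> s"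
  shows "lie_deriv br ph q x g (\<lambda>k. u (J k)) = (ph x + (\<Sum>i<q. \<delta> (J i))) * g (\<lambda>k. u (J k))"
  unfolding lie_deriv_def using vanishes_below_bracket_arg[OF g J]
  by (simp add: sum_distrib_right distrib_right)

lemma vanishes_below_lie_deriv_shift:
  assumes h: "vanishes_below q s h"
  shows "vanishes_below q s (\<lambda>Y. lie_deriv br ph q x h Y - \<mu> * h Y)"
proof -
  have "cochain q (\<lambda>Y. 1 * lie_deriv br ph q x h Y + (- \<mu>) * h Y)"
    using h by (intro cochain_lincomb cochain_lie_deriv) (simp_all add: vanishes_below_def)
  then show ?thesis
    unfolding vanishes_below_def
  proof (intro conjI allI impI)
    fix J assume J: "(\<forall>i<q. J i < N) \<and> (\<Sum>i<q. J i) < s"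
    then have "h (\<lambda>k. u (J k)) = 0" using h by (simp add: vanishes_below_def)
    moreover have "lie_deriv br ph q x h (\<lambda>k. u (J k)) = (ph x + (\<Sum>i<q. \<delta> (J i))) * h (\<lambda>k. u (J k))"
      using J by (intro lie_deriv_basis_tuple[OF h]) auto
    ultimately show "lie_deriv br ph q x h (\<lambda>k. u (J k)) - \<mu> * h (\<lambda>k. u (J k)) = 0" by simp
  qed simp
qed

lemma vanishes_below_lie_deriv_poly:
  assumes g: "vanishes_below q s g"
  shows "vanishes_below q s (lie_deriv_poly br ph q x L g) \<and>
    (\<forall>J. (\<forall>i<q. J i < N) \<and> (\<Sum>i<q. J i) = s \<longrightarrow>
       lie_deriv_poly br ph q x L g (\<lambda>k. u (J k)) =
       (\<Prod>\<mu>\<leftarrow>L. ph x + (\<Sum>i<q. \<delta> (J i)) - \<mu>) * g (\<lambda>k. u (J k)))"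
proof (induction L)
  case Nil
  then show ?case using g by simp
next
  case (Cons \<mu> L)
  define h where "h = lie_deriv_poly br ph q x L g"
  have h: "vanishes_below q s h" and top: "\<And>J. \<forall>i<q. J i < N \<Longrightarrow> (\<Sum>i<q. J i) = s \<Longrightarrow>
      h (\<lambda>k. u (J k)) = (\<Prod>\<mu>\<leftarrow>L. ph x + (\<Sum>i<q. \<delta> (J i)) - \<mu>) * g (\<lambda>k. u (J k))"
    using Cons unfolding h_def by auto
  show ?case
    unfolding lie_deriv_poly_Cons h_def[symmetric]
  proof (intro conjI allI impI)
    show "vanishes_below q s (\<lambda>Y. lie_deriv br ph q x h Y - \<mu> * h Y)"
      using h by (rule vanishes_below_lie_deriv_shift)
  next
    fix J assume "(\<forall>i<q. J i < N) \<and> (\<Sum>i<q. J i) = s"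
    then have J: "\<forall>i<q. J i < N" "(\<Sum>i<q. J i) = s" by auto
    have "lie_deriv br ph q x h (\<lambda>k. u (J k)) - \<mu> * h (\<lambda>k. u (J k)) =
        (ph x + (\<Sum>i<q. \<delta> (J i)) - \<mu>) * h (\<lambda>k. u (J k))"
      using lie_deriv_basis_tuple[OF h J(1)] J(2) by (simp add: algebra_simps)
    also have "\<dots> = (ph x + (\<Sum>i<q. \<delta> (J i)) - \<mu>) *
        ((\<Prod>\<mu>\<leftarrow>L. ph x + (\<Sum>i<q. \<delta> (J i)) - \<mu>) * g (\<lambda>k. u (J k)))"
      by (simp only: top[OF J])
    finally show "lie_deriv br ph q x h (\<lambda>k. u (J k)) - \<mu> * h (\<lambda>k. u (J k)) =
        (\<Prod>\<mu>'\<leftarrow>\<mu> # L. ph x + (\<Sum>i<q. \<delta> (J i)) - \<mu>') * g (\<lambda>k. u (J k))"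
      by (simp only: mult.assoc prod_list.Cons list.map)
  qed
qed

lemma vanishes_below_Suc_lie_deriv_poly:
  assumes g: "vanishes_below q s g"
    and L: "\<And>J. \<forall>i<q. J i < N \<Longrightarrow> inj_on J {..<q} \<Longrightarrow> ph x + (\<Sum>i<q. \<delta> (J i)) \<in> set L"
  shows "vanishes_below q (Suc s) (lie_deriv_poly br ph q x L g)"
proof -
  note poly = vanishes_below_lie_deriv_poly[OF g, of L]
  have below: "vanishes_below q s (lie_deriv_poly br ph q x L g)"
    using poly by (rule conjunct1)
  have top: "lie_deriv_poly br ph q x L g (\<lambda>k. u (J k)) =
      (\<Prod>\<mu>\<leftarrow>L. ph x + (\<Sum>i<q. \<delta> (J i)) - \<mu>) * g (\<lambda>k. u (J k))"
    if "\<forall>i<q. J i < N" "(\<Sum>i<q. J i) = s" for J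
    using conjunct2[OF poly] that by blast
  have top_zero: "lie_deriv_poly br ph q x L g (\<lambda>k. u (J k)) = 0"
    if J: "\<forall>i<q. J i < N" and s: "(\<Sum>i<q. J i) = s" for J
  proof (cases "inj_on J {..<q}")
    case True
    then have "(\<Prod>\<mu>\<leftarrow>L. ph x + (\<Sum>i<q. \<delta> (J i)) - \<mu>) = 0"
      using L[OF J] by (simp add: prod_list_zero_iff)
    then show ?thesis using top[OF J s] by simp
  next
    case False
    then obtain i j where ij: "i < q" "j < q" "i \<noteq> j" "J i = J j" unfolding inj_on_def by auto
    have "cochain q g" using g by (simp add: vanishes_below_def)
    then have "g (\<lambda>k. u (J k)) = 0" by (rule cochain_alternating[OF _ ij(1,2,3)]) (use ij in simp)
    then show ?thesis using top[OF J s] by simp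
  qed
  show ?thesis
    unfolding vanishes_below_def
  proof (intro conjI allI impI)
    show "cochain q (lie_deriv_poly br ph q x L g)"
      using below by (simp add: vanishes_below_def)
    fix J assume J: "(\<forall>i<q. J i < N) \<and> (\<Sum>i<q. J i) < Suc s"
    show "lie_deriv_poly br ph q x L g (\<lambda>k. u (J k)) = 0"
    proof (cases "(\<Sum>i<q. J i) = s")
      case True
      then show ?thesis using top_zero J by blast
    next
      case False
      then show ?thesis using below J by (simp add: vanishes_below_def)
    qed
  qed
qed

lemma lie_deriv_poly_annihilates:
  assumes g: "cochain q g"
    and L: "\<And>J. \<forall>i<q. J i < N \<Longrightarrow> inj_on J {..<q} \<Longrightarrow> ph x + (\<Sum>i<q. \<delta> (J i)) \<in> set L"
  shows "lie_deriv_poly br ph q x (concat (replicate (q * N + 1) L)) g = (\<lambda>Y. 0)"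
proof -
  define P where "P = lie_deriv_poly br ph q x (concat (replicate (q * N + 1) L)) g"
  have "vanishes_below q S (lie_deriv_poly br ph q x (concat (replicate S L)) g)" for S
  proof (induction S)
    case 0
    then show ?case using g by (simp add: vanishes_below_def)
  next
    case (Suc S)
    then show ?case
      using vanishes_below_Suc_lie_deriv_poly[OF _ L] by (simp add: lie_deriv_poly_append)
  qed
  from this[of "q * N + 1"] have below: "vanishes_below q (q * N + 1) P"
    unfolding P_def .
  show ?thesis
    unfolding P_def[symmetric]
  proof (rule cochain_eq_zero_if_zero_on_spanning_set[OF _ span_basis])
    show P: "cochain q P"
      using below by (simp add: vanishes_below_def)
    fix Y assume Y: "\<forall>i<q. Y i \<in> u ` {..<N}"
    define J where "J i = (SOME j. j < N \<and> Y i = u j)" for i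
    have J: "\<forall>i<q. J i < N \<and> Y i = u (J i)"
    proof (intro allI impI)
      fix i assume "i < q"
      then have "\<exists>j. j < N \<and> Y i = u j" using Y by auto
      then show "J i < N \<and> Y i = u (J i)" unfolding J_def by (rule someI_ex)
    qed
    have "(\<Sum>i<q. J i) \<le> (\<Sum>i<q. N)" by (rule sum_mono) (use J in auto)
    then have "P (\<lambda>k. u (J k)) = 0" using below J unfolding vanishes_below_def by auto
    moreover have "P Y = P (\<lambda>k. u (J k))" by (rule cochain_cong[OF P]) (use J in auto)
    ultimately show "P Y = 0" by simp
  qed
qed

lemma twisted_cocycle_in_coboundaries:
  assumes nonzero: "\<And>I. I \<subseteq> {..<N} \<Longrightarrow> ph x + (\<Sum>j\<in>I. \<delta> j) \<noteq> 0"
    and f: "twisted_cocycle br ph (Suc p) f"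
  shows "f \<in> coboundaries br ph (Suc p)"
proof -
  have "finite ((\<lambda>I. ph x + (\<Sum>j\<in>I. \<delta> j)) ` Pow {..<N})" by simp
  then obtain L where L: "set L = (\<lambda>I. ph x + (\<Sum>j\<in>I. \<delta> j)) ` Pow {..<N}"
    using finite_list by blast
  have "ph x + (\<Sum>i<Suc p. \<delta> (J i)) \<in> set L"
    if J: "\<forall>i<Suc p. J i < N" and inj: "inj_on J {..<Suc p}" for J
  proof -
    have "(\<Sum>i<Suc p. \<delta> (J i)) = (\<Sum>j\<in>J ` {..<Suc p}. \<delta> j)"
      by (simp add: sum.reindex[OF inj])
    moreover have "J ` {..<Suc p} \<subseteq> {..<N}" using J by auto
    ultimately show ?thesis unfolding L by auto
  qed
  then have "lie_deriv_poly br ph (Suc p) x (concat (replicate (Suc p * N + 1) L)) f = (\<lambda>Y. 0)"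
    using f by (intro lie_deriv_poly_annihilates) (simp_all add: twisted_cocycle_def)
  moreover have "0 \<notin> set L" using nonzero unfolding L by auto
  then have "0 \<notin> set (concat (replicate (Suc p * N + 1) L))" by simp
  ultimately show ?thesis
    by (rule in_coboundaries_if_lie_deriv_poly_zero[OF f])
qed

end

section \<open>Vanishing of twisted cohomology\<close>

lemma clinear_form_add: "clinear_form f \<Longrightarrow> clinear_form g \<Longrightarrow> clinear_form (\<lambda>x. f x + g x)"
  by (simp add: clinear_form_def algebra_simps)

lemma clinear_form_sum:
  assumes "\<And>j. j \<in> I \<Longrightarrow> clinear_form (f j)"
  shows "clinear_form (\<lambda>x. \<Sum>j\<in>I. f j x)"
  unfolding clinear_form_def
proof (intro allI)
  fix a b x y
  have "(\<Sum>j\<in>I. f j (a *s x + b *s y)) = (\<Sum>j\<in>I. a * f j x + b * f j y)"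
    using assms by (intro sum.cong) (auto simp: clinear_form_def)
  then show "(\<Sum>j\<in>I. f j (a *s x + b *s y)) = a * (\<Sum>j\<in>I. f j x) + b * (\<Sum>j\<in>I. f j y)"
    by (simp add: sum.distrib sum_distrib_left)
qed

lemma closed_form_scale: "closed_form br \<omega> \<Longrightarrow> closed_form br (\<lambda>x. c * \<omega> x)"
  by (simp add: closed_form_def clinear_form_def algebra_simps)

lemma ex_common_nonzero_point:
  fixes F :: "('n::finite lvec \<Rightarrow> complex) set"
  assumes "finite F" and "\<forall>\<psi>\<in>F. clinear_form \<psi> \<and> (\<exists>x. \<psi> x \<noteq> 0)"
  shows "\<exists>X. \<forall>\<psi>\<in>F. \<psi> X \<noteq> 0"
  using assms
proof (induction F rule: finite_induct)
  case empty
  then show ?case by simp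
next
  case (insert \<psi> F)
  obtain X0 where X0: "\<forall>\<psi>'\<in>F. \<psi>' X0 \<noteq> 0" using insert by auto
  obtain Y where Y: "\<psi> Y \<noteq> 0" using insert by auto
  have line: "\<psi>' (1 *s X0 + t *s Y) = \<psi>' X0 + t * \<psi>' Y" if "\<psi>' \<in> insert \<psi> F" for \<psi>' t
  proof -
    have "clinear_form \<psi>'" using insert.prems that by blast
    from this[unfolded clinear_form_def, rule_format, of 1 X0 t Y] show ?thesis by simp
  qed
  show ?case
  proof (cases "\<psi> X0 = 0")
    case False
    then show ?thesis using X0 by auto
  next
    case True
    (* Move along the line X0 + t Y, avoiding the finitely many t at which a form of F vanishes. *)
    have "finite (insert 0 ((\<lambda>\<psi>'. - \<psi>' X0 / \<psi>' Y) ` F))" using insert.hyps by simp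
    then obtain t :: complex where t: "t \<notin> insert 0 ((\<lambda>\<psi>'. - \<psi>' X0 / \<psi>' Y) ` F)"
      using ex_new_if_finite[OF infinite_UNIV_char_0] by blast
    have "\<psi>' (1 *s X0 + t *s Y) \<noteq> 0" if "\<psi>' \<in> F" for \<psi>'
    proof
      assume "\<psi>' (1 *s X0 + t *s Y) = 0"
      then have "\<psi>' X0 + t * \<psi>' Y = 0" using line that by simp
      moreover have "\<psi>' Y \<noteq> 0" using calculation X0 that by auto
      ultimately have "t = - \<psi>' X0 / \<psi>' Y" by (simp add: field_simps eq_neg_iff_add_eq_0)
      then show False using t that by auto
    qed
    moreover have "\<psi> (1 *s X0 + t *s Y) \<noteq> 0" using line[of \<psi> t] True Y t by simp
    ultimately show ?thesis by blast
  qed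
qed

lemma weight_flag_not_in_span:
  assumes wf: "weight_flag br m e \<alpha>" and j: "j < m"
  shows "e j \<notin> vec.span (e ` {..<j})"
proof
  assume "e j \<in> vec.span (e ` {..<j})"
  moreover have "e ` {..<j} \<subseteq> e ` {..<m} - {e j}"
    using wf j unfolding weight_flag_def by (auto simp: inj_on_def)
  ultimately have "e j \<in> vec.span (e ` {..<m} - {e j})"
    using vec.span_mono by blast
  then have "vec.dependent (e ` {..<m})"
    unfolding vec.dependent_def using j by blast
  then show False using wf unfolding weight_flag_def by simp
qed

lemma weight_flag_clinear:
  assumes lie: "lie_algebra br" and wf: "weight_flag br m e \<alpha>" and j: "j < m"
  shows "clinear_form (\<alpha> j)"
  unfolding clinear_form_def
proof (intro allI, rule ccontr)
  fix a b x y
  define S where "S = vec.span (e ` {..<j})"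
  define c where "c = a * \<alpha> j x + b * \<alpha> j y - \<alpha> j (a *s x + b *s y)"
  assume "\<alpha> j (a *s x + b *s y) \<noteq> a * \<alpha> j x + b * \<alpha> j y"
  then have c0: "c \<noteq> 0" unfolding c_def by simp
  have H: "br z (e j) - \<alpha> j z *s e j \<in> S" for z
    using wf j unfolding weight_flag_def S_def by blast
  have "br (a *s x + b *s y) (e j) = a *s br x (e j) + b *s br y (e j)"
    using lie unfolding lie_algebra_def by blast
  then have "c *s e j = (br (a *s x + b *s y) (e j) - \<alpha> j (a *s x + b *s y) *s e j)
      - a *s (br x (e j) - \<alpha> j x *s e j) - b *s (br y (e j) - \<alpha> j y *s e j)"
    unfolding c_def by (simp add: algebra_simps vector_sadd_rdistrib vector_ssub_ldistrib scalar_mult_eq_scaleR)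
  also have "\<dots> \<in> S"
    unfolding S_def by (intro vec.span_diff vec.span_scale H[unfolded S_def])
  finally have "(1 / c) *s (c *s e j) \<in> S" unfolding S_def by (rule vec.span_scale)
  then show False using c0 weight_flag_not_in_span[OF wf j] unfolding S_def by simp
qed

context twisted_lie_algebra
begin

(* The flag of [g, g] is extended by the standard basis of g; the added vectors get diagonal
   entry 0 because [X, g] lies in [g, g]. *)

lemma weight_flag_triangular:
  assumes wf: "weight_flag br m e \<alpha>"
  shows "\<exists>u N. triangular_lie_deriv br ph X u N (\<lambda>j. if j < m then \<alpha> j X else 0)"
proof -
  obtain h where h: "bij_betw h {0..<CARD('n)} (UNIV :: 'n set)"
    using ex_bij_betw_nat_finite[of "UNIV :: 'n set"] by auto
  define u where "u j = (if j < m then e j else axis (h (j - m)) 1)" for j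
  have u_e: "u ` {..<j} = e ` {..<j}" if "j \<le> m" for j
    using that unfolding u_def by auto
  have "br X (u j) - (if j < m then \<alpha> j X else 0) *s u j \<in> vec.span (u ` {..<j})" for j
  proof (cases "j < m")
    case True
    then show ?thesis using wf u_e[of j] unfolding weight_flag_def u_def by simp
  next
    case False
    have "br X (u j) \<in> derived br UNIV" unfolding derived_def by (rule vec.span_base) auto
    also have "\<dots> = vec.span (u ` {..<m})" using wf u_e[of m] unfolding weight_flag_def by simp
    also have "\<dots> \<subseteq> vec.span (u ` {..<j})" using False by (intro vec.span_mono) auto
    finally show ?thesis using False by simp
  qed
  moreover have "cart_basis \<subseteq> u ` {..<m + CARD('n)}"
  proof
    fix v assume "v \<in> (cart_basis :: 'n lvec set)"
    then obtain i where v: "v = axis i 1" unfolding cart_basis_def by auto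
    have "i \<in> h ` {0..<CARD('n)}" using h unfolding bij_betw_def by simp
    then obtain t where "t < CARD('n)" "h t = i" by auto
    then have "u (m + t) = v" "m + t < m + CARD('n)" unfolding u_def v by simp_all
    then show "v \<in> u ` {..<m + CARD('n)}" by blast
  qed
  then have "vec.span (u ` {..<m + CARD('n)}) = UNIV"
    using vec.span_mono[of cart_basis] by auto
  ultimately show ?thesis
    by (intro exI triangular_lie_deriv.intro twisted_lie_algebra_axioms triangular_lie_deriv_axioms.intro)
qed

lemma twisted_cocycle_0_eq_zero:
  assumes f: "twisted_cocycle br ph 0 f" and X: "ph X \<noteq> 0"
  shows "f = (\<lambda>Y. 0)"
proof
  fix Y
  have "f Y = f (\<lambda>n. cons_arg X Y (Suc n))"
    using f by (intro cochain_cong[of 0]) (simp_all add: twisted_cocycle_def)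
  moreover have "ph X * f (\<lambda>n. cons_arg X Y (Suc n)) = 0"
    using f dtw_0[of br ph f "cons_arg X Y"] by (simp add: twisted_cocycle_def fun_eq_iff)
  ultimately show "f Y = 0" using X by simp
qed

lemma twisted_cohom_trivial_if_weight_sums_nonzero:
  assumes wf: "weight_flag br m e \<alpha>" and generic: "\<forall>I \<subseteq> {..<m}. ph X + (\<Sum>j\<in>I. \<alpha> j X) \<noteq> 0"
  shows "\<not> twisted_cohom_nontrivial br ph"
proof
  assume "twisted_cohom_nontrivial br ph"
  then obtain q f where f: "twisted_cocycle br ph q f" and not_exact: "f \<notin> coboundaries br ph q"
    unfolding twisted_cohom_nontrivial_def twisted_cocycle_def by blast
  show False
  proof (cases q)
    case 0
    have "ph X \<noteq> 0" using generic by auto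
    then show False using twisted_cocycle_0_eq_zero f not_exact 0 by simp
  next
    case (Suc p)
    obtain u N where "triangular_lie_deriv br ph X u N (\<lambda>j. if j < m then \<alpha> j X else 0)"
      using weight_flag_triangular[OF wf] by blast
    moreover have "ph X + (\<Sum>j\<in>I. if j < m then \<alpha> j X else 0) \<noteq> 0" if "I \<subseteq> {..<N}" for I
    proof -
      have "finite I" using finite_subset[OF that] by simp
      then show ?thesis using generic[rule_format, of "I \<inter> {..<m}"] by (simp add: sum.inter_restrict)
    qed
    ultimately have "f \<in> coboundaries br ph (Suc p)"
      using f Suc by (intro triangular_lie_deriv.twisted_cocycle_in_coboundaries) auto
    then show False using not_exact Suc by simp
  qed
qed

lemma neg_in_weight_sums_if_nontrivial:
  assumes wf: "weight_flag br m e \<alpha>" and nontrivial: "twisted_cohom_nontrivial br ph"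
  shows "(\<lambda>x. - ph x) \<in> {\<lambda>x. 0} \<union> weight_sums m \<alpha>"
proof (rule ccontr)
  assume notin: "(\<lambda>x. - ph x) \<notin> {\<lambda>x. 0} \<union> weight_sums m \<alpha>"
  define F where "F = (\<lambda>I x. ph x + (\<Sum>j\<in>I. \<alpha> j x)) ` Pow {..<m}"
  have "\<exists>x. ph x + (\<Sum>j\<in>I. \<alpha> j x) \<noteq> 0" if I: "I \<subseteq> {..<m}" for I
  proof (rule ccontr)
    assume "\<nexists>x. ph x + (\<Sum>j\<in>I. \<alpha> j x) \<noteq> 0"
    then have "(\<lambda>x. - ph x) = (\<lambda>x. \<Sum>j\<in>I. \<alpha> j x)"
      by (simp add: fun_eq_iff add_eq_0_iff)
    then show False using notin I by (cases "I = {}") (auto simp: weight_sums_def)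
  qed
  moreover have "clinear_form (\<lambda>x. ph x + (\<Sum>j\<in>I. \<alpha> j x))" if "I \<subseteq> {..<m}" for I
    using closed that weight_flag_clinear[OF lie_algebra wf]
    by (intro clinear_form_add clinear_form_sum) (auto simp: closed_form_def)
  ultimately have "\<forall>\<psi>\<in>F. clinear_form \<psi> \<and> (\<exists>x. \<psi> x \<noteq> 0)"
    unfolding F_def by blast
  then obtain X where "\<forall>\<psi>\<in>F. \<psi> X \<noteq> 0"
    using ex_common_nonzero_point[of F] unfolding F_def by blast
  then have "\<forall>I \<subseteq> {..<m}. ph X + (\<Sum>j\<in>I. \<alpha> j X) \<noteq> 0" unfolding F_def by auto
  then show False using twisted_cohom_trivial_if_weight_sums_nonzero[OF wf] nontrivial by blast
qed

end

lemma twisted_cohom_nontrivial_zero: "twisted_cohom_nontrivial br (\<lambda>x. 0)"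
  unfolding twisted_cohom_nontrivial_def
proof (intro exI conjI)
  show "cochain 0 (\<lambda>X. 1)" unfolding cochain_def by simp
  show "dtw br (\<lambda>x. 0) 0 (\<lambda>X. 1) = (\<lambda>X. 0)" by (simp add: dtw_0 fun_eq_iff)
  show "(\<lambda>X. 1) \<notin> coboundaries br (\<lambda>x. 0) 0" by (simp add: fun_eq_iff)
qed

lemma finite_weight_sums: "finite (weight_sums m \<alpha>)"
proof (rule finite_subset)
  show "weight_sums m \<alpha> \<subseteq> (\<lambda>I x. \<Sum>i\<in>I. \<alpha> i x) ` Pow {..<m}"
    unfolding weight_sums_def by auto
qed simp

theorem mainTheorem4:
  fixes br :: "'n::finite lvec \<Rightarrow> 'n lvec \<Rightarrow> 'n lvec"
    and m :: nat and e :: "nat \<Rightarrow> 'n lvec" and \<alpha> :: "nat \<Rightarrow> 'n lvec \<Rightarrow> complex"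
  assumes "solvable_lie br"
    and "weight_flag br m e \<alpha>"
  shows "\<exists>\<Omega>t \<subseteq> weight_sums m \<alpha>.
           (\<forall>\<omega> (c::complex). closed_form br \<omega> \<longrightarrow>
              (twisted_cohom_nontrivial br (\<lambda>x. c * \<omega> x) \<longleftrightarrow>
               (\<lambda>x. - c * \<omega> x) \<in> {\<lambda>x. 0} \<union> \<Omega>t))
         \<and> finite {(\<lambda>x. - c * \<omega> x) | \<omega> (c::complex).
                     closed_form br \<omega> \<and> twisted_cohom_nontrivial br (\<lambda>x. c * \<omega> x)}"
proof -
  have neg_in: "(\<lambda>x. - c * \<omega> x) \<in> {\<lambda>x. 0} \<union> weight_sums m \<alpha>"
    if "closed_form br \<omega>" "twisted_cohom_nontrivial br (\<lambda>x. c * \<omega> x)" for \<omega> c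
  proof -
    interpret twisted_lie_algebra br "\<lambda>x. c * \<omega> x"
      using assms(1) closed_form_scale[OF that(1)] by unfold_locales (simp_all add: solvable_lie_def)
    show ?thesis using neg_in_weight_sums_if_nontrivial[OF assms(2) that(2)] by simp
  qed
  define \<Omega>t where "\<Omega>t = {\<psi> \<in> weight_sums m \<alpha>. twisted_cohom_nontrivial br (\<lambda>x. - \<psi> x)}"
  have iff: "twisted_cohom_nontrivial br (\<lambda>x. c * \<omega> x) \<longleftrightarrow> (\<lambda>x. - c * \<omega> x) \<in> {\<lambda>x. 0} \<union> \<Omega>t"
    if "closed_form br \<omega>" for \<omega> c
    using neg_in[OF that] twisted_cohom_nontrivial_zero[of br]
    by (auto simp: \<Omega>t_def fun_eq_iff)
  have "{(\<lambda>x. - c * \<omega> x) | \<omega> c. closed_form br \<omega> \<and> twisted_cohom_nontrivial br (\<lambda>x. c * \<omega> x)}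
      \<subseteq> {\<lambda>x. 0} \<union> weight_sums m \<alpha>"
    using neg_in by blast
  then have fin: "finite {(\<lambda>x. - c * \<omega> x) | \<omega> c.
      closed_form br \<omega> \<and> twisted_cohom_nontrivial br (\<lambda>x. c * \<omega> x)}"
    by (rule finite_subset) (simp add: finite_weight_sums)
  show ?thesis
  proof (intro exI[of _ \<Omega>t] conjI allI impI)
    show "\<Omega>t \<subseteq> weight_sums m \<alpha>" unfolding \<Omega>t_def by blast
  qed (erule iff | rule fin)+
qed

end
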